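(* For every positive integer $n$ there exist a $4$-dense $n$-element point set $P_n$ in the plane and a stacking order $f$ of $\mathcal{D}(P_n)$ such that $$\lim_{\varepsilon\to 0}\mathrm{vis}(\mathcal{D}(\varepsilon P_n),f)\ge n^{3/4},$$ where $f$ also denotes the corresponding stacking order of $\mathcal{D}(\varepsilon P_n)$.
   Context: For a point $p$ in the plane, $D(p)$ denotes the closed disk of radius $1$ centered at $p$, and for a finite point set $P$, $\mathcal{D}(P)=\{D(p): p\in P\}$. A stacking order of a finite collection $\mathcal{D}$ of $n$ distinct unit disks is a bijection $f:\mathcal{D}\to\{1,\dots,n\}$; $f(D)$ is regarded as the height of $D$, and the arrangement is viewed from below. A point $x$ on the boundary circle of $D\in\mathcal{D}$ is visible if $x$ does not lie in any disk $D'\in\mathcal{D}$ with $f(D')<f(D)$. The visible perimeter $\mathrm{vis}(\mathcal{D},f)$ is the total length of all visible boundary points, summed over all disks of $\mathcal{D}$. For $\varepsilon>0$, $\varepsilon P=\{(\varepsilon x,\varepsilon y): (x,y)\in P\}$, and a stacking order $f$ of $\mathcal{D}(P)$ is identified with the stacking order $D(\varepsilon p)\mapsto f(D(p))$ of $\mathcal{D}(\varepsilon P)$. An $n$-element point set $P$ is $C$-dense if $\max\{|pq|: p,q\in P\}\,/\,\min\{|pq|: p,q\in P,\ p\ne q\}\le C n^{1/2}$. *)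

theory Defs
  imports "HOL-Analysis.Analysis"
begin

definition unit_disk :: "complex \<Rightarrow> complex set" where
  "unit_disk p = cball p 1"

text \<open>A stacking order of the disks D(P) (disks are distinct iff centres are),
  viewed as a bijection from the centres onto {1..n}.\<close>
definition stacking_order :: "complex set \<Rightarrow> (complex \<Rightarrow> nat) \<Rightarrow> bool" where
  "stacking_order P f \<longleftrightarrow> finite P \<and> bij_betw f P {1..card P}"

text \<open>Visible perimeter: the boundary circle of D(p) is parametrised by arc length
  theta in [0, 2 pi) as p + cis theta; a boundary point is visible if it lies in no disk
  of smaller height.\<close>
definition vis :: "complex set \<Rightarrow> (complex \<Rightarrow> nat) \<Rightarrow> real" where
  "vis P f = (\<Sum>p\<in>P. measure lborel
      {\<theta>\<in>{0..<2*pi}. \<forall>q\<in>P. f q < f p \<longrightarrow> p + cis \<theta> \<notin> unit_disk q})"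

definition scale_set :: "real \<Rightarrow> complex set \<Rightarrow> complex set" where
  "scale_set \<epsilon> P = (\<lambda>p. complex_of_real \<epsilon> * p) ` P"

definition scale_order :: "real \<Rightarrow> (complex \<Rightarrow> nat) \<Rightarrow> (complex \<Rightarrow> nat)" where
  "scale_order \<epsilon> f = (\<lambda>z. f (z / complex_of_real \<epsilon>))"

text \<open>C-dense n-element point set (for n = 1 the ratio is undefined; condition vacuous).\<close>
definition dense :: "real \<Rightarrow> nat \<Rightarrow> complex set \<Rightarrow> bool" where
  "dense C n P \<longleftrightarrow> finite P \<and> card P = n \<and>
     (2 \<le> n \<longrightarrow>
       Max {dist p q | p q. p \<in> P \<and> q \<in> P} / Min {dist p q | p q. p \<in> P \<and> q \<in> P \<and> p \<noteq> q}
         \<le> C * sqrt (real n))"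

end

theory Submission
  imports Defs
begin

text \<open>Take rows of \<open>2 s\<^sup>2 + 1\<close> points, row \<open>j\<close> bent into the parabola \<open>y = j - x\<^sup>2/(4 s\<^sup>2)\<close>,
  \<open>\<bar>x\<bar> \<le> s\<^sup>2\<close>, with \<open>s\<close> about \<open>n powr (1/4) / 2\<close>, and stack the disks in reading order; this set
  is 4-dense. Shrinking the configuration only shrinks the visible arcs, so the visible perimeter
  has a limit, at least the measure of the directions \<open>\<theta>\<close> with \<open>(p - q) \<bullet> cis \<theta> > 0\<close> for every
  lower centre \<open>q\<close>. For a point in a later row these include all normals of lines whose slope is
  within \<open>1/s\<close> of the tangent slope of its row, as every earlier point lies below such a line: an
  arc of length about \<open>4/(5s)\<close>. Summing over the \<open>n\<close> points gives about \<open>n/s\<close>, i.e. \<open>n powr (3/4)\<close>.\<close>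

lemma cis_inner_self: "cis \<theta> \<bullet> cis \<theta> = 1"
  by (simp add: inner_complex_def sin_cos_squared_add3)

lemma arctan_diff_ge:
  fixes u v M :: real
  assumes "u < v" "\<bar>u\<bar> \<le> M" "\<bar>v\<bar> \<le> M"
  shows "(v - u) / (1 + M\<^sup>2) \<le> arctan v - arctan u"
proof -
  obtain z where z: "u < z" "z < v" "arctan v - arctan u = (v - u) * inverse (1 + z\<^sup>2)"
    using MVT2[OF assms(1), of arctan "\<lambda>x. inverse (1 + x\<^sup>2)"] DERIV_arctan by blast
  have "\<bar>z\<bar> \<le> M"
    using z assms by linarith
  then have "z\<^sup>2 \<le> M\<^sup>2"
    by (metis abs_le_square_iff abs_of_nonneg abs_ge_zero order.trans)
  then have "inverse (1 + M\<^sup>2) \<le> inverse (1 + z\<^sup>2)"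
    by (intro le_imp_inverse_le) (auto simp: add_pos_nonneg)
  then show ?thesis
    using z assms(1) by (simp add: divide_inverse mult_left_mono)
qed

lemma inner_cis_pos_of_slope:
  assumes "-(pi/2) < \<phi>" "\<phi> < pi/2" and "0 < Im z - tan \<phi> * Re z"
  shows "0 < z \<bullet> cis (\<phi> + pi/2)"
proof -
  have "0 < cos \<phi>"
    using assms by (intro cos_gt_zero_pi) auto
  moreover have "cis (\<phi> + pi/2) = Complex (- sin \<phi>) (cos \<phi>)"
    by (simp add: complex_eq_iff cos_add sin_add)
  then have "z \<bullet> cis (\<phi> + pi/2) = cos \<phi> * (Im z - tan \<phi> * Re z)"
    using \<open>0 < cos \<phi>\<close> by (simp add: inner_complex_def tan_def field_simps)
  ultimately show ?thesis
    using assms by simp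
qed

text \<open>The visible arc of \<open>D(e p)\<close> in \<open>\<D>(e P)\<close>, with the disk test divided by \<open>e\<close>; at \<open>e = 0\<close>
  it is the limiting arc.\<close>

definition scaled_visible_arc :: "complex set \<Rightarrow> (complex \<Rightarrow> nat) \<Rightarrow> real \<Rightarrow> complex \<Rightarrow> real set" where
  "scaled_visible_arc P f e p = {\<theta>\<in>{0..<2*pi}. \<forall>q\<in>P. f q < f p \<longrightarrow>
      0 < 2 * ((p - q) \<bullet> cis \<theta>) + e * (norm (p - q))\<^sup>2}"

lemma notin_unit_disk_scaled_iff:
  assumes "e > 0"
  shows "of_real e * p + cis \<theta> \<notin> unit_disk (of_real e * q) \<longleftrightarrow>
    0 < 2 * ((p - q) \<bullet> cis \<theta>) + e * (norm (p - q))\<^sup>2"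
proof -
  define z where "z = p - q"
  have "(dist (of_real e * q) (of_real e * p + cis \<theta>))\<^sup>2 = (e *\<^sub>R z + cis \<theta>) \<bullet> (e *\<^sub>R z + cis \<theta>)"
    unfolding power2_norm_eq_inner[symmetric] z_def
    by (simp add: dist_norm norm_minus_commute scaleR_conv_of_real algebra_simps)
  also have "\<dots> = 1 + e * (2 * (z \<bullet> cis \<theta>) + e * (norm z)\<^sup>2)"
    using cis_inner_self[of \<theta>] by (simp add: inner_add inner_commute power2_norm_eq_inner algebra_simps)
  finally have "(dist (of_real e * q) (of_real e * p + cis \<theta>))\<^sup>2 =
      1 + e * (2 * ((p - q) \<bullet> cis \<theta>) + e * (norm (p - q))\<^sup>2)"
    by (simp add: z_def)
  moreover have "dist (of_real e * q) (of_real e * p + cis \<theta>) \<le> 1 \<longleftrightarrow>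
      (dist (of_real e * q) (of_real e * p + cis \<theta>))\<^sup>2 \<le> 1"
    by (simp add: abs_square_le_1)
  ultimately show ?thesis
    using assms by (simp add: unit_disk_def mult_le_0_iff not_le)
qed

lemma vis_scale_set_eq:
  assumes "finite P" "e > 0"
  shows "vis (scale_set e P) (scale_order e f) = (\<Sum>p\<in>P. measure lborel (scaled_visible_arc P f e p))"
proof -
  have inj: "inj_on (\<lambda>p. complex_of_real e * p) P"
    using assms by (auto simp: inj_on_def)
  have "scale_order e f (complex_of_real e * z) = f z" for z
    using assms by (simp add: scale_order_def)
  then show ?thesis
    unfolding vis_def scale_set_def sum.reindex[OF inj] o_def
    by (intro sum.cong) (simp_all add: notin_unit_disk_scaled_iff[OF assms(2)] scaled_visible_arc_def)
qed

lemma scaled_visible_arc_mono: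
  assumes "0 \<le> e1" "e1 \<le> e2"
  shows "scaled_visible_arc P f e1 p \<subseteq> scaled_visible_arc P f e2 p"
proof -
  have "0 < x + e2 * (norm z)\<^sup>2" if "0 < x + e1 * (norm z)\<^sup>2" for x and z :: complex
    using that mult_right_mono[OF assms(2), of "(norm z)\<^sup>2"] by simp
  then show ?thesis
    unfolding scaled_visible_arc_def by blast
qed

lemma scaled_visible_arc_fmeasurable:
  assumes "finite P"
  shows "scaled_visible_arc P f e p \<in> fmeasurable lborel"
proof -
  let ?U = "\<Inter>q\<in>{q\<in>P. f q < f p}. {\<theta>. 0 < 2 * ((p - q) \<bullet> cis \<theta>) + e * (norm (p - q))\<^sup>2}"
  have "open {\<theta>. 0 < 2 * ((p - q) \<bullet> cis \<theta>) + e * (norm (p - q))\<^sup>2}" for q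
    by (intro open_Collect_less continuous_intros)
  then have "open ?U"
    using assms by (intro open_INT) auto
  have eq: "scaled_visible_arc P f e p = {0..<2*pi} \<inter> ?U"
    unfolding scaled_visible_arc_def by blast
  have "scaled_visible_arc P f e p \<in> sets lborel"
    unfolding eq using \<open>open ?U\<close> by (intro sets.Int borel_open) auto
  moreover have "{0..2*pi} \<in> fmeasurable lborel"
    using fmeasurable_cbox[of 0 "2*pi"] by simp
  ultimately show ?thesis
    by (rule fmeasurableI2[rotated 2]) (auto simp: eq)
qed

lemma vis_scale_set_tendsto:
  assumes "finite P"
  obtains L where "((\<lambda>e. vis (scale_set e P) (scale_order e f)) \<longlongrightarrow> L) (at_right 0)"
    and "(\<Sum>p\<in>P. measure lborel (scaled_visible_arc P f 0 p)) \<le> L"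
proof -
  define g where "g e = (\<Sum>p\<in>P. measure lborel (scaled_visible_arc P f e p))" for e
  have mono: "g a \<le> g b" if "0 \<le> a" "a \<le> b" for a b
    unfolding g_def
  proof (rule sum_mono)
    fix p
    show "measure lborel (scaled_visible_arc P f a p) \<le> measure lborel (scaled_visible_arc P f b p)"
      using measure_mono_fmeasurable[OF scaled_visible_arc_mono[OF that]
          fmeasurableD[OF scaled_visible_arc_fmeasurable] scaled_visible_arc_fmeasurable] assms
      by blast
  qed
  have "(g \<longlongrightarrow> Inf (g ` ({0<..} \<inter> UNIV))) (at 0 within ({0<..} \<inter> UNIV))"
    by (rule Lim_right_bound[where K = "g 0"]) (use mono in auto)
  then have "(g \<longlongrightarrow> Inf (g ` {0<..})) (at_right 0)"
    by simp
  moreover have "g 0 \<le> Inf (g ` {0<..})"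
    using mono by (intro cInf_greatest) auto
  moreover have "\<forall>\<^sub>F e in at_right 0. g e = vis (scale_set e P) (scale_order e f)"
    using vis_scale_set_eq[OF assms] unfolding g_def eventually_at_right_field
    by (intro exI[of _ 1]) auto
  ultimately show ?thesis
    using that[OF Lim_transform_eventually] unfolding g_def by blast
qed

definition grid_width :: "nat \<Rightarrow> nat" where
  "grid_width s = 2 * s\<^sup>2 + 1"

definition grid_curvature :: "nat \<Rightarrow> real" where
  "grid_curvature s = 1 / (4 * (real s)\<^sup>2)"

definition grid_x :: "nat \<Rightarrow> nat \<Rightarrow> real" where
  "grid_x s k = real (k mod grid_width s) - real (s\<^sup>2)"

definition grid_y :: "nat \<Rightarrow> nat \<Rightarrow> real" where
  "grid_y s k = real (k div grid_width s) - grid_curvature s * (grid_x s k)\<^sup>2"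

definition grid_point :: "nat \<Rightarrow> nat \<Rightarrow> complex" where
  "grid_point s k = Complex (grid_x s k) (grid_y s k)"

definition upper_slope :: "nat \<Rightarrow> nat \<Rightarrow> real" where
  "upper_slope s k = grid_curvature s - 2 * grid_curvature s * grid_x s k"

definition lower_slope :: "nat \<Rightarrow> nat \<Rightarrow> real" where
  "lower_slope s k = - 1 / real s - 2 * grid_curvature s * grid_x s k"

lemma grid_width_pos: "0 < grid_width s"
  by (simp add: grid_width_def)

lemma abs_grid_x_le: "\<bar>grid_x s k\<bar> \<le> real (s\<^sup>2)"
proof -
  have "k mod grid_width s < 2 * s\<^sup>2 + 1"
    using grid_width_pos[of s] by (simp add: grid_width_def)
  then show ?thesis
    unfolding grid_x_def by linarith
qed

lemma grid_curvature_pos: "s \<ge> 1 \<Longrightarrow> 0 < grid_curvature s"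
  by (simp add: grid_curvature_def)

lemma grid_curvature_le: "s \<ge> 1 \<Longrightarrow> grid_curvature s \<le> 1 / real s"
  by (simp add: grid_curvature_def field_simps power2_eq_square)

lemma abs_grid_tangent_slope_le:
  assumes "s \<ge> 1"
  shows "\<bar>2 * grid_curvature s * grid_x s k\<bar> \<le> 1/2"
proof -
  have "\<bar>2 * grid_curvature s * grid_x s k\<bar> = 2 * grid_curvature s * \<bar>grid_x s k\<bar>"
    using grid_curvature_pos[OF assms] by (simp add: abs_mult)
  also have "\<dots> \<le> 2 * grid_curvature s * real (s\<^sup>2)"
    using abs_grid_x_le grid_curvature_pos[OF assms] by simp
  also have "\<dots> = 1/2"
    using assms by (simp add: grid_curvature_def)
  finally show ?thesis .
qed

text \<open>With \<open>a\<close> the curvature, \<open>d = x' - x\<close> and \<open>\<tau> = \<sigma> + 2 a x\<close> the slope relative to the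
  tangent of the row at \<open>x\<close>, the quantity below is \<open>(j - j') + a d\<^sup>2 + \<tau> d\<close> for rows \<open>j' \<le> j\<close>.
  In the same row \<open>d \<le> -1\<close> and \<open>\<tau> < a\<close> make it positive; in an earlier row \<open>a d\<^sup>2 + \<tau> d + 1\<close>
  has negative discriminant because \<open>\<bar>\<tau>\<bar> < 1/s\<close> and \<open>4 a = 1/s\<^sup>2\<close>.\<close>

lemma earlier_grid_point_below_line:
  assumes s: "s \<ge> 1" and "k' < k" and upper: "\<sigma> < upper_slope s k"
    and lower: "grid_width s \<le> k \<Longrightarrow> lower_slope s k < \<sigma>"
  shows "0 < (grid_y s k - grid_y s k') - \<sigma> * (grid_x s k - grid_x s k')"
proof -
  define a where "a = grid_curvature s"
  define \<tau> where "\<tau> = \<sigma> + 2 * a * grid_x s k"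
  define d where "d = grid_x s k' - grid_x s k"
  define j where "j = k div grid_width s"
  define j' where "j' = k' div grid_width s"
  have spos: "real s > 0" and apos: "a > 0"
    using s grid_curvature_pos[OF s] by (auto simp: a_def)
  have eq: "(grid_y s k - grid_y s k') - \<sigma> * (grid_x s k - grid_x s k') = (real j - real j') + a * d\<^sup>2 + \<tau> * d"
    unfolding grid_y_def a_def[symmetric] j_def j'_def \<tau>_def d_def
    by (simp add: power2_eq_square algebra_simps)
  have "\<tau> < a"
    using upper by (simp add: \<tau>_def upper_slope_def a_def)
  have "j' \<le> j"
    unfolding j_def j'_def using \<open>k' < k\<close> by (simp add: div_le_mono)
  then consider "j' < j" | "j' = j"
    by linarith
  then show ?thesis
  proof cases
    case 1
    then have "grid_width s \<le> k"
      unfolding j_def by (metis div_less le_less_linear less_nat_zero_code)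
    then have "- 1 / real s < \<tau>"
      using lower by (simp add: \<tau>_def lower_slope_def a_def)
    moreover have "\<tau> < 1 / real s"
      using \<open>\<tau> < a\<close> grid_curvature_le[OF s] by (simp add: a_def)
    ultimately have "\<bar>real s * \<tau>\<bar> < 1"
      using spos by (simp add: abs_less_iff field_simps)
    then have "(real s * \<tau>)\<^sup>2 < 1"
      by (simp add: abs_square_less_1)
    moreover have "4 * (real s)\<^sup>2 * (a * d\<^sup>2 + \<tau> * d + 1)
        = (d + 2 * real s * (real s * \<tau>))\<^sup>2 + 4 * (real s)\<^sup>2 * (1 - (real s * \<tau>)\<^sup>2)"
      using spos by (simp add: a_def grid_curvature_def power2_eq_square field_simps)
    ultimately have "0 < 4 * (real s)\<^sup>2 * (a * d\<^sup>2 + \<tau> * d + 1)"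
      using spos by (simp add: add_nonneg_pos)
    then have "0 < a * d\<^sup>2 + \<tau> * d + 1"
      by (simp add: zero_less_mult_iff)
    moreover have "1 \<le> real j - real j'"
      using 1 by linarith
    ultimately show ?thesis
      using eq by linarith
  next
    case 2
    have "k = grid_width s * j + k mod grid_width s" "k' = grid_width s * j' + k' mod grid_width s"
      unfolding j_def j'_def by simp_all
    then have "k' mod grid_width s < k mod grid_width s"
      using \<open>k' < k\<close> 2 by (metis add_less_cancel_left)
    then have "d \<le> -1"
      unfolding d_def grid_x_def by simp
    then have "a * d \<le> - a"
      using apos by (metis mult_left_mono mult_minus1_right less_imp_le)
    then have "a * d + \<tau> < 0"
      using \<open>\<tau> < a\<close> by linarith
    then have "0 < d * (a * d + \<tau>)"
      using \<open>d \<le> -1\<close> by (intro mult_neg_neg) auto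
    then show ?thesis
      using eq 2 by (simp add: power2_eq_square algebra_simps)
  qed
qed

definition arc_start :: "nat \<Rightarrow> nat \<Rightarrow> real" where
  "arc_start s k = (if k < grid_width s then 0 else pi/2 + arctan (lower_slope s k))"

definition arc_end :: "nat \<Rightarrow> nat \<Rightarrow> real" where
  "arc_end s k = pi/2 + arctan (upper_slope s k)"

lemma inner_cis_grid_point_pos:
  assumes s: "s \<ge> 1" and "k' < k" and "arc_start s k < \<theta>" "\<theta> < arc_end s k"
  shows "0 < (grid_point s k - grid_point s k') \<bullet> cis \<theta>"
proof -
  define \<phi> where "\<phi> = \<theta> - pi/2"
  have "\<phi> < arctan (upper_slope s k)"
    using assms by (simp add: \<phi>_def arc_end_def)
  moreover have bounds: "-(pi/2) < \<phi>" "\<phi> < pi/2"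
    using assms arctan_bounded[of "lower_slope s k"] arctan_bounded[of "upper_slope s k"]
    by (auto simp: \<phi>_def arc_start_def arc_end_def split: if_splits)
  ultimately have "tan \<phi> < upper_slope s k"
    by (metis arctan_tan arctan_less_iff)
  moreover have "lower_slope s k < tan \<phi>" if "grid_width s \<le> k"
  proof -
    have "arctan (lower_slope s k) < \<phi>"
      using assms(3) that by (simp add: \<phi>_def arc_start_def)
    then show ?thesis
      by (metis arctan_tan[OF bounds] arctan_less_iff)
  qed
  ultimately have "0 < (grid_y s k - grid_y s k') - tan \<phi> * (grid_x s k - grid_x s k')"
    using earlier_grid_point_below_line[OF s \<open>k' < k\<close>] by blast
  then show ?thesis
    using inner_cis_pos_of_slope[OF bounds] by (simp add: \<phi>_def grid_point_def)
qed

lemma arc_bounds: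
  assumes "s \<ge> 1"
  shows "0 \<le> arc_start s k" "arc_start s k \<le> arc_end s k" "arc_end s k < 2*pi"
proof -
  show "0 \<le> arc_start s k"
    using arctan_bounded[of "lower_slope s k"] by (simp add: arc_start_def)
  have "- 1 / real s \<le> 0"
    by simp
  then have "lower_slope s k \<le> upper_slope s k"
    using grid_curvature_pos[OF assms] unfolding lower_slope_def upper_slope_def by linarith
  then have "arctan (lower_slope s k) \<le> arctan (upper_slope s k)"
    by (simp add: arctan_le_iff)
  then show "arc_start s k \<le> arc_end s k"
    using arctan_bounded[of "upper_slope s k"] by (simp add: arc_start_def arc_end_def)
  show "arc_end s k < 2*pi"
    using arctan_bounded[of "upper_slope s k"] pi_gt_zero by (simp add: arc_end_def)
qed

lemma first_row_arc_ge:
  assumes "s \<ge> 1" "k < grid_width s"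
  shows "107/100 \<le> arc_end s k - arc_start s k"
proof -
  have "-(1/2) \<le> upper_slope s k"
    using abs_grid_tangent_slope_le[OF assms(1), of k] grid_curvature_pos[OF assms(1)]
    by (simp add: upper_slope_def abs_le_iff)
  then have "arctan (-(1/2)) \<le> arctan (upper_slope s k)"
    by (simp add: arctan_le_iff)
  moreover have "arctan (1/2) \<le> 1/2"
    by (rule arctan_le_self) simp
  ultimately show ?thesis
    using assms(2) pi_approx by (simp add: arc_start_def arc_end_def arctan_minus)
qed

definition row_arc_bound :: "nat \<Rightarrow> real" where
  "row_arc_bound s = (4 * real s + 1) / (5 * (real s)\<^sup>2 + 4 * real s + 4)"

lemma later_row_arc_ge:
  assumes s: "s \<ge> 1" and "grid_width s \<le> k"
  shows "row_arc_bound s \<le> arc_end s k - arc_start s k"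
proof -
  have spos: "real s > 0"
    using s by simp
  have "(upper_slope s k - lower_slope s k) / (1 + (1/2 + 1/real s)\<^sup>2)
      \<le> arctan (upper_slope s k) - arctan (lower_slope s k)"
    using abs_grid_tangent_slope_le[OF s, of k] grid_curvature_pos[OF s] grid_curvature_le[OF s] spos
    by (intro arctan_diff_ge) (auto simp: upper_slope_def lower_slope_def abs_le_iff)
  moreover have "(upper_slope s k - lower_slope s k) / (1 + (1/2 + 1/real s)\<^sup>2) = row_arc_bound s"
  proof -
    let ?c = "4 * (real s)\<^sup>2"
    have "(upper_slope s k - lower_slope s k) / (1 + (1/2 + 1/real s)\<^sup>2)
        = (?c * (upper_slope s k - lower_slope s k)) / (?c * (1 + (1/2 + 1/real s)\<^sup>2))"
      using spos by simp
    also have "?c * (upper_slope s k - lower_slope s k) = 4 * real s + 1"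
      using spos by (simp add: upper_slope_def lower_slope_def grid_curvature_def field_simps power2_eq_square)
    also have "?c * (1 + (1/2 + 1/real s)\<^sup>2) = 5 * (real s)\<^sup>2 + 4 * real s + 4"
      using spos by (simp add: field_simps power2_eq_square)
    finally show ?thesis
      by (simp add: row_arc_bound_def)
  qed
  ultimately show ?thesis
    using assms(2) by (simp add: arc_start_def arc_end_def)
qed

definition grid_points :: "nat \<Rightarrow> nat \<Rightarrow> complex set" where
  "grid_points s n = grid_point s ` {..<n}"

definition grid_order :: "nat \<Rightarrow> nat \<Rightarrow> complex \<Rightarrow> nat" where
  "grid_order s n z = the_inv_into {..<n} (grid_point s) z + 1"

lemma inj_grid_point: "inj (grid_point s)"
proof (rule injI)
  fix k k' assume "grid_point s k = grid_point s k'"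
  then have "grid_x s k = grid_x s k'" "grid_y s k = grid_y s k'"
    by (auto simp: grid_point_def)
  then have "k mod grid_width s = k' mod grid_width s" "k div grid_width s = k' div grid_width s"
    by (simp_all add: grid_x_def grid_y_def)
  then show "k = k'"
    by (metis div_mult_mod_eq)
qed

lemma grid_order_grid_point: "k < n \<Longrightarrow> grid_order s n (grid_point s k) = k + 1"
  by (simp add: grid_order_def the_inv_into_f_f[OF inj_on_subset[OF inj_grid_point subset_UNIV]])

lemma card_grid_points: "card (grid_points s n) = n"
  by (simp add: grid_points_def card_image[OF inj_on_subset[OF inj_grid_point subset_UNIV]])

lemma stacking_order_grid: "stacking_order (grid_points s n) (grid_order s n)"
proof -
  have "grid_order s n ` grid_points s n = (\<lambda>k. k + 1) ` {..<n}"
    unfolding grid_points_def image_image by (intro image_cong) (simp_all add: grid_order_grid_point)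
  also have "\<dots> = {1..n}"
    using image_Suc_lessThan[of n] by simp
  finally have "grid_order s n ` grid_points s n = {1..n}" .
  moreover have "inj_on (grid_order s n) (grid_points s n)"
    by (auto simp: inj_on_def grid_points_def grid_order_grid_point)
  ultimately show ?thesis
    unfolding stacking_order_def card_grid_points
    by (auto simp: grid_points_def bij_betw_def)
qed

lemma grid_arc_subset_visible_arc:
  assumes s: "s \<ge> 1" and "k < n"
  shows "{arc_start s k<..<arc_end s k}
    \<subseteq> scaled_visible_arc (grid_points s n) (grid_order s n) 0 (grid_point s k)"
proof
  fix \<theta> assume \<theta>: "\<theta> \<in> {arc_start s k<..<arc_end s k}"
  have "0 < (grid_point s k - q) \<bullet> cis \<theta>"
    if q: "q \<in> grid_points s n" and lower: "grid_order s n q < grid_order s n (grid_point s k)" for q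
  proof -
    obtain k' where "k' < n" "q = grid_point s k'"
      using q unfolding grid_points_def by blast
    moreover from this have "k' < k"
      using lower \<open>k < n\<close> by (simp add: grid_order_grid_point)
    ultimately show ?thesis
      using inner_cis_grid_point_pos[OF s] \<theta> by simp
  qed
  moreover have "\<theta> \<in> {0..<2*pi}"
    using \<theta> arc_bounds[OF s, of k] by auto
  ultimately show "\<theta> \<in> scaled_visible_arc (grid_points s n) (grid_order s n) 0 (grid_point s k)"
    by (simp add: scaled_visible_arc_def)
qed

lemma grid_vis_tendsto:
  assumes s: "s \<ge> 1"
  obtains L where "((\<lambda>e. vis (scale_set e (grid_points s n)) (scale_order e (grid_order s n))) \<longlongrightarrow> L) (at_right 0)"
    and "(\<Sum>k<n. arc_end s k - arc_start s k) \<le> L"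
proof -
  let ?P = "grid_points s n" and ?f = "grid_order s n"
  obtain L where lim: "((\<lambda>e. vis (scale_set e ?P) (scale_order e ?f)) \<longlongrightarrow> L) (at_right 0)"
    and ge: "(\<Sum>p\<in>?P. measure lborel (scaled_visible_arc ?P ?f 0 p)) \<le> L"
    using vis_scale_set_tendsto[of ?P] by (auto simp: grid_points_def)
  have "(\<Sum>k<n. arc_end s k - arc_start s k)
      \<le> (\<Sum>k<n. measure lborel (scaled_visible_arc ?P ?f 0 (grid_point s k)))"
  proof (rule sum_mono)
    fix k assume "k \<in> {..<n}"
    then have "measure lborel {arc_start s k<..<arc_end s k}
        \<le> measure lborel (scaled_visible_arc ?P ?f 0 (grid_point s k))"
      using grid_arc_subset_visible_arc[OF s]
        scaled_visible_arc_fmeasurable[of ?P ?f 0] by (intro measure_mono_fmeasurable) (auto simp: grid_points_def)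
    then show "arc_end s k - arc_start s k \<le> measure lborel (scaled_visible_arc ?P ?f 0 (grid_point s k))"
      using arc_bounds[OF s, of k] by simp
  qed
  also have "\<dots> = (\<Sum>p\<in>?P. measure lborel (scaled_visible_arc ?P ?f 0 p))"
    unfolding grid_points_def
    by (simp add: sum.reindex[OF inj_on_subset[OF inj_grid_point subset_UNIV]])
  finally show ?thesis
    using that[OF lim] ge by linarith
qed

lemma dist_grid_point_ge_1:
  assumes "k \<noteq> k'"
  shows "1 \<le> dist (grid_point s k) (grid_point s k')"
proof (cases "k mod grid_width s = k' mod grid_width s")
  case True
  then have "k div grid_width s \<noteq> k' div grid_width s"
    using assms by (metis div_mult_mod_eq)
  then have "1 \<le> \<bar>real (k div grid_width s) - real (k' div grid_width s)\<bar>"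
    by linarith
  also have "\<dots> = \<bar>Im (grid_point s k - grid_point s k')\<bar>"
    using True by (simp add: grid_point_def grid_y_def grid_x_def)
  also have "\<dots> \<le> dist (grid_point s k) (grid_point s k')"
    using abs_Im_le_cmod[of "grid_point s k - grid_point s k'"] by (simp add: dist_norm)
  finally show ?thesis .
next
  case False
  then have "1 \<le> \<bar>real (k mod grid_width s) - real (k' mod grid_width s)\<bar>"
    by linarith
  also have "\<dots> = \<bar>Re (grid_point s k - grid_point s k')\<bar>"
    by (simp add: grid_point_def grid_x_def)
  also have "\<dots> \<le> dist (grid_point s k) (grid_point s k')"
    using abs_Re_le_cmod[of "grid_point s k - grid_point s k'"] by (simp add: dist_norm)
  finally show ?thesis .
qed

definition grid_x_span :: "nat \<Rightarrow> nat \<Rightarrow> real" where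
  "grid_x_span s n = real (min (n - 1) (2 * s\<^sup>2))"

definition grid_y_span :: "nat \<Rightarrow> nat \<Rightarrow> real" where
  "grid_y_span s n = real ((n - 1) div grid_width s) + real (s\<^sup>2) / 4"

lemma grid_y_bounds:
  assumes "s \<ge> 1" "k < n"
  shows "- (real (s\<^sup>2) / 4) \<le> grid_y s k" "grid_y s k \<le> real ((n - 1) div grid_width s)"
proof -
  have "(grid_x s k)\<^sup>2 \<le> (real (s\<^sup>2))\<^sup>2"
    using abs_grid_x_le[of s k] by (metis abs_le_square_iff abs_of_nat of_nat_power)
  then have "grid_curvature s * (grid_x s k)\<^sup>2 \<le> grid_curvature s * (real (s\<^sup>2))\<^sup>2"
    using grid_curvature_pos[OF assms(1)] by (intro mult_left_mono) auto
  also have "\<dots> = real (s\<^sup>2) / 4"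
    using assms(1) by (simp add: grid_curvature_def power2_eq_square field_simps)
  finally have "grid_curvature s * (grid_x s k)\<^sup>2 \<le> real (s\<^sup>2) / 4" .
  moreover have "0 \<le> grid_curvature s * (grid_x s k)\<^sup>2"
    using grid_curvature_pos[OF assms(1)] by simp
  moreover have "real (k div grid_width s) \<le> real ((n - 1) div grid_width s)"
    using assms(2) by (simp add: div_le_mono)
  ultimately show "- (real (s\<^sup>2) / 4) \<le> grid_y s k" "grid_y s k \<le> real ((n - 1) div grid_width s)"
    unfolding grid_y_def by linarith+
qed

lemma dist_grid_point_le:
  assumes s: "s \<ge> 1" and k: "k < n" "k' < n"
  shows "dist (grid_point s k) (grid_point s k') \<le> sqrt ((grid_x_span s n)\<^sup>2 + (grid_y_span s n)\<^sup>2)"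
proof -
  have "k mod grid_width s \<le> min (n - 1) (2 * s\<^sup>2)" "k' mod grid_width s \<le> min (n - 1) (2 * s\<^sup>2)"
    using k mod_less_divisor[OF grid_width_pos, of s] mod_less_eq_dividend[of k "grid_width s"]
      mod_less_eq_dividend[of k' "grid_width s"]
    unfolding grid_width_def by (auto simp: less_Suc_eq_le simp del: mod_less_eq_dividend)
  then have "\<bar>grid_x s k - grid_x s k'\<bar> \<le> grid_x_span s n"
    unfolding grid_x_def grid_x_span_def by linarith
  then have "(grid_x s k - grid_x s k')\<^sup>2 \<le> (grid_x_span s n)\<^sup>2"
    by (metis abs_le_square_iff abs_of_nonneg abs_ge_zero order.trans)
  moreover have "\<bar>grid_y s k - grid_y s k'\<bar> \<le> grid_y_span s n"
    using grid_y_bounds[OF s k(1)] grid_y_bounds[OF s k(2)] unfolding grid_y_span_def by linarith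
  then have "(grid_y s k - grid_y s k')\<^sup>2 \<le> (grid_y_span s n)\<^sup>2"
    by (metis abs_le_square_iff abs_of_nonneg abs_ge_zero order.trans)
  moreover have "dist (grid_point s k) (grid_point s k')
      = sqrt ((grid_x s k - grid_x s k')\<^sup>2 + (grid_y s k - grid_y s k')\<^sup>2)"
    by (simp add: dist_norm cmod_def grid_point_def)
  ultimately show ?thesis
    by simp
qed

lemma dense_grid_points:
  assumes s: "s \<ge> 1" and span: "2 \<le> n \<Longrightarrow> (grid_x_span s n)\<^sup>2 + (grid_y_span s n)\<^sup>2 \<le> 16 * real n"
  shows "dense 4 n (grid_points s n)"
  unfolding dense_def
proof (intro conjI impI card_grid_points)
  show "finite (grid_points s n)"
    by (simp add: grid_points_def)
  assume n: "2 \<le> n"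
  define A where "A = {dist p q | p q. p \<in> grid_points s n \<and> q \<in> grid_points s n}"
  define B where "B = {dist p q | p q. p \<in> grid_points s n \<and> q \<in> grid_points s n \<and> p \<noteq> q}"
  have "A = (\<lambda>(p, q). dist p q) ` (grid_points s n \<times> grid_points s n)"
    unfolding A_def by auto
  then have "finite A"
    by (simp add: grid_points_def)
  have "B \<subseteq> A"
    unfolding A_def B_def by blast
  then have "finite B"
    using \<open>finite A\<close> by (rule finite_subset)
  have "grid_point s 0 \<noteq> grid_point s 1"
    using inj_grid_point by (metis injD zero_neq_one)
  then have "B \<noteq> {}"
    using n unfolding B_def grid_points_def by force
  then have "A \<noteq> {}"
    using \<open>B \<subseteq> A\<close> by blast
  have "Max A \<le> 4 * sqrt (real n)"
  proof (rule Max.boundedI[OF \<open>finite A\<close> \<open>A \<noteq> {}\<close>])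
    fix x assume "x \<in> A"
    then obtain k k' where "k < n" "k' < n" "x = dist (grid_point s k) (grid_point s k')"
      unfolding A_def grid_points_def by blast
    then have "x \<le> sqrt ((grid_x_span s n)\<^sup>2 + (grid_y_span s n)\<^sup>2)"
      using dist_grid_point_le[OF s] by simp
    also have "\<dots> \<le> sqrt (16 * real n)"
      using span[OF n] by simp
    finally show "x \<le> 4 * sqrt (real n)"
      by (simp add: real_sqrt_mult)
  qed
  have "1 \<le> Min B"
  proof (rule Min.boundedI[OF \<open>finite B\<close> \<open>B \<noteq> {}\<close>])
    fix x assume "x \<in> B"
    then obtain p q where "p \<in> grid_points s n" "q \<in> grid_points s n" "p \<noteq> q" "x = dist p q"
      unfolding B_def by blast
    moreover from this obtain k k' where "p = grid_point s k" "q = grid_point s k'"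
      unfolding grid_points_def by blast
    ultimately show "1 \<le> x"
      using dist_grid_point_ge_1[of k k' s] by auto
  qed
  have "0 \<le> Max A"
    using Max_in[OF \<open>finite A\<close> \<open>A \<noteq> {}\<close>] unfolding A_def by auto
  then have "Max A / Min B \<le> Max A"
    using \<open>1 \<le> Min B\<close> divide_left_mono[of 1 "Min B" "Max A"] by simp
  then show "Max A / Min B \<le> 4 * sqrt (real n)"
    using \<open>Max A \<le> 4 * sqrt (real n)\<close> by linarith
qed

definition grid_arc_bound :: "nat \<Rightarrow> nat \<Rightarrow> real" where
  "grid_arc_bound s n = (if n \<le> grid_width s then 107/100 * real n
     else 107/100 * real (grid_width s) + row_arc_bound s * (real n - real (grid_width s)))"

lemma grid_arc_bound_le_sum:
  assumes s: "s \<ge> 1"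
  shows "grid_arc_bound s n \<le> (\<Sum>k<n. arc_end s k - arc_start s k)"
proof (cases "n \<le> grid_width s")
  case True
  have "(\<Sum>k<n. 107/100 :: real) \<le> (\<Sum>k<n. arc_end s k - arc_start s k)"
    using True by (intro sum_mono first_row_arc_ge[OF s]) auto
  then show ?thesis
    using True by (simp add: grid_arc_bound_def)
next
  case False
  have split: "{..<n} = {..<grid_width s} \<union> {grid_width s..<n}"
    using False by auto
  have "(\<Sum>k<n. arc_end s k - arc_start s k) = (\<Sum>k<grid_width s. arc_end s k - arc_start s k)
      + (\<Sum>k\<in>{grid_width s..<n}. arc_end s k - arc_start s k)"
    unfolding split by (rule sum.union_disjoint) auto
  moreover have "(\<Sum>k<grid_width s. 107/100 :: real) \<le> (\<Sum>k<grid_width s. arc_end s k - arc_start s k)"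
    by (intro sum_mono first_row_arc_ge[OF s]) auto
  moreover have "(\<Sum>k\<in>{grid_width s..<n}. row_arc_bound s)
      \<le> (\<Sum>k\<in>{grid_width s..<n}. arc_end s k - arc_start s k)"
    by (intro sum_mono later_row_arc_ge[OF s]) auto
  ultimately show ?thesis
    using False by (simp add: grid_arc_bound_def of_nat_diff mult.commute)
qed

lemma grid_arc_bound_single_row:
  assumes "real n = t^4" "1 \<le> t" "n \<le> grid_width s"
  shows "t^3 \<le> grid_arc_bound s n"
proof -
  have "t^3 * 1 \<le> t^3 * t"
    using assms(2) by (intro mult_left_mono) auto
  then have "t^3 \<le> real n"
    using assms(1) by (simp add: power_Suc2 power3_eq_cube power4_eq_xxxx mult.assoc)
  then show ?thesis
    using assms(3) by (simp add: grid_arc_bound_def)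
qed

lemma grid_arc_bound_2:
  assumes "real n = t^4" "1 \<le> t"
  shows "t^3 \<le> grid_arc_bound 2 n"
proof (cases "n \<le> grid_width 2")
  case True
  then show ?thesis
    using grid_arc_bound_single_row assms by blast
next
  case False
  then have "grid_arc_bound 2 n = 107/100 * 9 + 9/32 * (t^4 - 9)"
    using assms(1) by (simp add: grid_arc_bound_def grid_width_def row_arc_bound_def)
  also have "\<dots> = t^3 + (9/32 * (t\<^sup>2 - 16/9 * t - 2)\<^sup>2 + 17/72 * (t - 72/17)\<^sup>2
      + (107/100 * 9 - 9/32 * 9 - 9/8 - 72/17))"
    by (simp add: power2_eq_square power3_eq_cube power4_eq_xxxx field_simps)
  finally have "grid_arc_bound 2 n = t^3 + (9/32 * (t\<^sup>2 - 16/9 * t - 2)\<^sup>2 + 17/72 * (t - 72/17)\<^sup>2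
      + (107/100 * 9 - 9/32 * 9 - 9/8 - 72/17))" .
  moreover have "0 \<le> 9/32 * (t\<^sup>2 - 16/9 * t - 2)\<^sup>2 + 17/72 * (t - 72/17)\<^sup>2
      + (107/100 * 9 - 9/32 * 9 - 9/8 - 72/17)"
    by (intro add_nonneg_nonneg mult_nonneg_nonneg) auto
  ultimately show ?thesis
    by linarith
qed

lemma grid_span_2:
  assumes "real n = t^4" "0 \<le> t" "t < 4" "2 \<le> n"
  shows "(grid_x_span 2 n)\<^sup>2 + (grid_y_span 2 n)\<^sup>2 \<le> 16 * real n"
proof (cases "n \<le> 9")
  case True
  then have dx: "grid_x_span 2 n = real n - 1" "grid_x_span 2 n \<le> 8"
    using assms(4) by (auto simp: grid_x_span_def of_nat_diff)
  have "(grid_x_span 2 n)\<^sup>2 \<le> 8 * grid_x_span 2 n"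
    unfolding power2_eq_square using dx assms(4) by (intro mult_right_mono) auto
  moreover have "grid_y_span 2 n = 1"
    using True by (simp add: grid_y_span_def grid_width_def)
  ultimately show ?thesis
    using dx by simp
next
  case False
  have "t^4 < 4^4"
    using assms(2,3) by (intro power_strict_mono) auto
  then have "real n < 256"
    using assms(1) by simp
  have "real ((n - 1) div 9) \<le> real (n - 1) / 9"
    using of_nat_div_le_of_nat[of "n - 1" 9] by simp
  then have dy: "grid_y_span 2 n \<le> (real n + 8) / 9" "0 \<le> grid_y_span 2 n"
    using assms(4) by (auto simp: grid_y_span_def grid_width_def of_nat_diff)
  then have "grid_y_span 2 n \<le> 30"
    using \<open>real n < 256\<close> by simp
  then have "(grid_y_span 2 n)\<^sup>2 \<le> 30 * ((real n + 8) / 9)"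
    unfolding power2_eq_square using dy by (intro mult_mono) auto
  moreover have "grid_x_span 2 n = 8"
    using False by (simp add: grid_x_span_def)
  ultimately show ?thesis
    using False by simp
qed

lemma grid_span_le:
  assumes "real n = t^4" "4 \<le> t" "2 * real s - 2 \<le> t" "t / 2 < real s"
  shows "(grid_x_span s n)\<^sup>2 + (grid_y_span s n)\<^sup>2 \<le> 16 * real n"
proof -
  define x where "x = real s"
  have "0 < x"
    using assms x_def by simp
  have "x\<^sup>2 \<le> t\<^sup>2"
    using assms \<open>0 < x\<close> unfolding x_def by (intro power_mono) auto
  have "(t/2)\<^sup>2 < x\<^sup>2"
    using assms(2,4) unfolding x_def by (intro power_strict_mono) auto
  then have "t\<^sup>2 / 4 < x\<^sup>2"
    by (simp add: power_divide)
  have "real (min (n - 1) (2 * s\<^sup>2)) \<le> real (2 * s\<^sup>2)"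
    by (simp only: of_nat_le_iff min.cobounded2)
  then have dx: "grid_x_span s n \<le> 2 * x\<^sup>2" "0 \<le> grid_x_span s n"
    by (auto simp: grid_x_span_def x_def)
  have "(grid_x_span s n)\<^sup>2 \<le> (2 * x\<^sup>2)\<^sup>2"
    using dx by (intro power_mono) auto
  also have "\<dots> \<le> (2 * t\<^sup>2)\<^sup>2"
    using \<open>x\<^sup>2 \<le> t\<^sup>2\<close> \<open>0 < x\<close> by (intro power_mono) auto
  finally have dx2: "(grid_x_span s n)\<^sup>2 \<le> 4 * t^4"
    by (simp add: power_mult_distrib power2_eq_square power4_eq_xxxx)
  have "real ((n - 1) div grid_width s) \<le> real (n - 1) / real (grid_width s)"
    by (rule of_nat_div_le_of_nat)
  also have "\<dots> \<le> real n / (2 * x\<^sup>2)"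
    using \<open>0 < x\<close> by (intro frac_le) (auto simp: grid_width_def x_def)
  also have "\<dots> \<le> t^4 / (2 * (t\<^sup>2 / 4))"
    unfolding assms(1) using \<open>t\<^sup>2 / 4 < x\<^sup>2\<close> assms(2) \<open>0 < x\<close>
    by (intro divide_left_mono mult_left_mono) auto
  also have "\<dots> = 2 * t\<^sup>2"
    using assms(2) by (simp add: field_simps power2_eq_square power4_eq_xxxx)
  finally have "real ((n - 1) div grid_width s) \<le> 2 * t\<^sup>2" .
  then have dy: "grid_y_span s n \<le> 9/4 * t\<^sup>2" "0 \<le> grid_y_span s n"
    using \<open>x\<^sup>2 \<le> t\<^sup>2\<close> by (auto simp: grid_y_span_def x_def)
  have "(grid_y_span s n)\<^sup>2 \<le> (9/4 * t\<^sup>2)\<^sup>2"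
    using dy by (intro power_mono) auto
  then have "(grid_y_span s n)\<^sup>2 \<le> 81/16 * t^4"
    by (simp add: power_mult_distrib power2_eq_square power4_eq_xxxx)
  with dx2 show ?thesis
    using assms(1,2) by simp
qed

lemma grid_arc_bound_3:
  assumes "real n = t^4" "4 \<le> t"
  shows "t^3 \<le> grid_arc_bound 3 n"
proof -
  have "4^4 \<le> t^4"
    using assms by (intro power_mono) auto
  then have "grid_arc_bound 3 n = 107/100 * 19 - 13/61 * 19 + 13/61 * t^4"
    using assms(1) by (simp add: grid_arc_bound_def grid_width_def row_arc_bound_def field_simps)
  moreover have "t^3 - 13/61 * t^4 \<le> 33489/2197"
  proof (cases "61/13 \<le> t")
    case True
    have "t^3 * 1 \<le> t^3 * (13/61 * t)"
      using True assms by (intro mult_left_mono) auto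
    then show ?thesis
      by (simp add: power3_eq_cube power4_eq_xxxx algebra_simps)
  next
    case False
    have "t^3 \<le> (61/13)^3"
      using False assms by (intro power_mono) auto
    then have "t^3 * (1 - 13/61 * t) \<le> (61/13)^3 * (9/61)"
      using False assms by (intro mult_mono) auto
    then show ?thesis
      by (simp add: power3_eq_cube power4_eq_xxxx algebra_simps)
  qed
  ultimately show ?thesis
    by simp
qed

lemma grid_arc_bound_large:
  assumes "real n = t^4" "1 \<le> t" "4 \<le> s" "2 * real s - 2 \<le> t"
  shows "t^3 \<le> grid_arc_bound s n"
proof (cases "n \<le> grid_width s")
  case True
  then show ?thesis
    using grid_arc_bound_single_row assms by blast
next
  case False
  define x where "x = real s"
  have "4 \<le> x"
    using assms by (simp add: x_def)
  have "0 < 5 * x\<^sup>2 + 4 * x + 4"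
    using \<open>4 \<le> x\<close> by (simp add: add_pos_pos)
  have c: "row_arc_bound s = (4 * x + 1) / (5 * x\<^sup>2 + 4 * x + 4)"
    by (simp add: row_arc_bound_def x_def)
  have "0 \<le> row_arc_bound s" "row_arc_bound s \<le> 1"
    unfolding c using \<open>4 \<le> x\<close> \<open>0 < 5 * x\<^sup>2 + 4 * x + 4\<close>
    by (simp_all add: divide_le_eq_1 power2_eq_square)
  have "4 * x \<le> x * x"
    using \<open>4 \<le> x\<close> by (intro mult_right_mono) auto
  moreover have "(4 * x + 1) * (2 * x - 2) - (5 * x\<^sup>2 + 4 * x + 4) = 3 * (x * x) - 10 * x - 6"
    by (simp add: power2_eq_square algebra_simps)
  ultimately have "5 * x\<^sup>2 + 4 * x + 4 \<le> (4 * x + 1) * (2 * x - 2)"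
    using \<open>4 \<le> x\<close> by linarith
  then have "1 \<le> row_arc_bound s * (2 * x - 2)"
    unfolding c using \<open>0 < 5 * x\<^sup>2 + 4 * x + 4\<close> by (simp add: field_simps)
  also have "\<dots> \<le> row_arc_bound s * t"
    using assms \<open>0 \<le> row_arc_bound s\<close> by (intro mult_left_mono) (auto simp: x_def)
  finally have "t^3 * 1 \<le> t^3 * (row_arc_bound s * t)"
    using assms by (intro mult_left_mono) auto
  then have "t^3 \<le> row_arc_bound s * real n"
    using assms(1) by (simp add: power3_eq_cube power4_eq_xxxx algebra_simps)
  moreover have "row_arc_bound s * real (grid_width s) \<le> 107/100 * real (grid_width s)"
    using \<open>row_arc_bound s \<le> 1\<close> by (intro mult_right_mono) auto
  ultimately show ?thesis
    using False by (simp add: grid_arc_bound_def algebra_simps)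
qed

lemma exists_grid_size:
  assumes "n \<ge> 1"
  obtains s where "s \<ge> 1"
    and "2 \<le> n \<Longrightarrow> (grid_x_span s n)\<^sup>2 + (grid_y_span s n)\<^sup>2 \<le> 16 * real n"
    and "real n powr (3/4) \<le> grid_arc_bound s n"
proof -
  define t where "t = real n powr (1/4)"
  have "0 < real n"
    using assms by simp
  then have t4: "real n = t^4" and t3: "real n powr (3/4) = t^3"
    unfolding t_def using powr_power[of "real n" "1/4" 4] powr_power[of "real n" "1/4" 3] by simp_all
  have t1: "1 \<le> t"
    unfolding t_def using assms by (intro ge_one_powr_ge_zero) auto
  define s where "s = max 2 (nat \<lfloor>t/2\<rfloor> + 1)"
  have floor_s: "real (nat \<lfloor>t/2\<rfloor> + 1) = of_int \<lfloor>t/2\<rfloor> + 1"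
    using t1 by simp
  have "t/2 < of_int \<lfloor>t/2\<rfloor> + 1"
    by linarith
  also have "\<dots> \<le> real s"
    unfolding s_def using floor_s by (metis max.cobounded2 of_nat_le_iff)
  finally have "t/2 < real s" .
  consider "s = 2" "t < 4" | "s \<ge> 3" "4 \<le> t" "2 * real s - 2 \<le> t"
  proof (cases "nat \<lfloor>t/2\<rfloor> + 1 \<le> 2")
    case True
    then have "\<lfloor>t/2\<rfloor> \<le> 1"
      by linarith
    then have "t < 4"
      by linarith
    with True show thesis
      using that(1) by (simp add: s_def)
  next
    case False
    then have "s = nat \<lfloor>t/2\<rfloor> + 1" "s \<ge> 3"
      by (simp_all add: s_def)
    then have "2 * real s - 2 \<le> t"
      using floor_s by linarith
    with \<open>s \<ge> 3\<close> show thesis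
      using that(2) by simp
  qed
  then have "(2 \<le> n \<longrightarrow> (grid_x_span s n)\<^sup>2 + (grid_y_span s n)\<^sup>2 \<le> 16 * real n) \<and> t^3 \<le> grid_arc_bound s n"
  proof cases
    case 1
    then show ?thesis
      using t1 grid_span_2[OF t4] grid_arc_bound_2[OF t4 t1] by simp
  next
    case 2
    moreover have "t^3 \<le> grid_arc_bound s n"
      using 2 grid_arc_bound_3[OF t4] grid_arc_bound_large[OF t4 t1]
      by (cases "s = 3") simp_all
    ultimately show ?thesis
      using grid_span_le[OF t4 _ _ \<open>t/2 < real s\<close>] by simp
  qed
  then show ?thesis
    using that[of s] t3 by (simp add: s_def)
qed

theorem theorem3:
  fixes n :: nat
  assumes "n \<ge> 1"
  shows "\<exists>P f. dense 4 n P \<and> stacking_order P f \<and>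
           (\<exists>L. ((\<lambda>\<epsilon>. vis (scale_set \<epsilon> P) (scale_order \<epsilon> f)) \<longlongrightarrow> L) (at_right 0)
                \<and> L \<ge> real n powr (3/4))"
proof -
  obtain s where s: "s \<ge> 1"
    and span: "2 \<le> n \<Longrightarrow> (grid_x_span s n)\<^sup>2 + (grid_y_span s n)\<^sup>2 \<le> 16 * real n"
    and bound: "real n powr (3/4) \<le> grid_arc_bound s n"
    using exists_grid_size[OF assms] by blast
  obtain L where lim: "((\<lambda>e. vis (scale_set e (grid_points s n)) (scale_order e (grid_order s n))) \<longlongrightarrow> L) (at_right 0)"
    and "(\<Sum>k<n. arc_end s k - arc_start s k) \<le> L"
    using grid_vis_tendsto[OF s] by blast
  then have "real n powr (3/4) \<le> L"
    using bound grid_arc_bound_le_sum[OF s, of n] by linarith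
  with lim show ?thesis
    using dense_grid_points[OF s span] stacking_order_grid[of s n] by (intro exI conjI)
qed

end
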